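(* Let $(\gamma^\sharp,\lambda^\sharp)$ be an eligible pair. Then $1-\gamma^{0T}\Sigma_{-1,-1}\gamma^\sharp\ge\Lambda_{\min}^2-o(1)$; in particular $1-\gamma^{0T}\Sigma_{-1,-1}\gamma^\sharp$ is eventually strictly positive and bounded away from zero. For $n$ sufficiently large define $$\Theta_1^\sharp:=\begin{pmatrix}1\\-\gamma^\sharp\end{pmatrix}\Big/\big(1-\gamma^{0T}\Sigma_{-1,-1}\gamma^\sharp\big)\in\mathbb{R}^p .$$ Then $\|\Sigma(\Theta_1^\sharp-\Theta_1)\|_\infty\le\lambda_0^\sharp$, where $\lambda_0^\sharp:=\lambda^\sharp/(1-\gamma^{0T}\Sigma_{-1,-1}\gamma^\sharp)=\mathcal{O}(\lambda^\sharp)$. Moreover $$\Theta_1^{\sharp T}\Sigma\Theta_1^\sharp=\Theta^\sharp_{1,1}+o(1)\le\Theta_{1,1}+o(1),$$ where $\Theta^\sharp_{1,1}$ denotes the first entry of $\Theta_1^\sharp$. Finally, in order that $\Theta_{1,1}-\Theta^\sharp_{1,1}$ be strictly positive and bounded away from zero, it must be true that $\lambda^\sharp\|\gamma^0\|_1$ is strictly positive and bounded away from zero.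
   Context: Asymptotic framework: all quantities may depend on $n$; limits are as $n\to\infty$. $\mathbf{x}=(\mathbf{x}_1,\dots,\mathbf{x}_p)$ is a zero-mean Gaussian row vector with covariance $\Sigma=\mathbb{E}\mathbf{x}^T\mathbf{x}$, nonsingular with all diagonal entries $1$ and smallest eigenvalue $\Lambda_{\min}^2$ with $1/\Lambda_{\min}^2=\mathcal{O}(1)$. $\Theta:=\Sigma^{-1}$, $\Theta_1$ is its first column and $\Theta_{1,1}$ its $(1,1)$ entry. $\mathbf{x}_{-1}:=(\mathbf{x}_2,\dots,\mathbf{x}_p)$, $\Sigma_{-1,-1}:=\mathbb{E}\mathbf{x}_{-1}^T\mathbf{x}_{-1}$, and $\gamma^0:=\Sigma_{-1,-1}^{-1}\mathbb{E}\mathbf{x}_{-1}^T\mathbf{x}_1\in\mathbb{R}^{p-1}$ is the coefficient vector of the projection of $\mathbf{x}_1$ on $\mathbf{x}_{-1}$. A pair $(\gamma^\sharp,\lambda^\sharp)$ with $\gamma^\sharp\in\mathbb{R}^{p-1}$, $\lambda^\sharp>0$ is called eligible if $\|\Sigma_{-1,-1}(\gamma^\sharp-\gamma^0)\|_\infty\le\lambda^\sharp$ and $\lambda^\sharp\|\gamma^\sharp\|_1\to0$. *)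

theory Defs
  imports "Jordan_Normal_Form.Matrix" "Jordan_Normal_Form.Char_Poly" "HOL-Library.Landau_Symbols"
begin

text \<open>Indices are 0-based: index 0 corresponds to x_1, index i+1 to x_(i+2).\<close>

definition sub_mm :: "real mat \<Rightarrow> real mat" where
  "sub_mm S = mat (dim_row S - 1) (dim_col S - 1) (\<lambda>(i,j). S $$ (i+1, j+1))"

definition sub_m1 :: "real mat \<Rightarrow> real vec" where
  "sub_m1 S = vec (dim_row S - 1) (\<lambda>i. S $$ (i+1, 0))"

definition vnorm_inf :: "real vec \<Rightarrow> real" where
  "vnorm_inf v = Max (insert 0 {\<bar>v $ i\<bar> | i. i < dim_vec v})"

definition vnorm_1 :: "real vec \<Rightarrow> real" where
  "vnorm_1 v = (\<Sum>i<dim_vec v. \<bar>v $ i\<bar>)"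

definition theta_sharp :: "real mat \<Rightarrow> real vec \<Rightarrow> real vec \<Rightarrow> real vec" where
  "theta_sharp S g0 g = (1 / (1 - g0 \<bullet> (sub_mm S *\<^sub>v g))) \<cdot>\<^sub>v
     vec (dim_row S) (\<lambda>i. if i = 0 then 1 else - (g $ (i - 1)))"

end

theory Submission
  imports Defs
begin

text \<open>
  Put M = Sigma_{-1,-1} and tau2(g) = 1 - gamma0' M g. Since M gamma0 = Sigma_{-1,1}, the block
  structure of Sigma gives Sigma (1, -g) = (tau2(g), - M (g - gamma0)). For g = gamma0 the second
  block vanishes, so (1, -gamma0) is tau2(gamma0) times the first column of Theta; hence
  Theta_11 = 1 / tau2(gamma0), and the Rayleigh bound for (1, -gamma0) gives
  tau2(gamma0) >= Lambda_min^2. For an eligible pair the second block is at most lambda in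
  sup-norm; this bounds Sigma (Theta_1^sharp - Theta_1) and gives
  Theta_1^sharp' Sigma Theta_1^sharp - Theta_11^sharp = g' M (g - gamma0) / tau2(g)^2.
  Finally tau2(g) - tau2(gamma0) = - gamma0' M (g - gamma0) lies between - lambda |g|_1 (M is
  positive semidefinite) and lambda |gamma0|_1; inverting these bounds, with tau2(gamma0) bounded
  away from zero, gives the remaining claims.
\<close>

section \<open>Quadratic forms on finite sequences\<close>

definition dot :: "nat \<Rightarrow> (nat \<Rightarrow> real) \<Rightarrow> (nat \<Rightarrow> real) \<Rightarrow> real" where
  "dot n x y = (\<Sum>i<n. x i * y i)"

definition matvec :: "nat \<Rightarrow> (nat \<Rightarrow> nat \<Rightarrow> real) \<Rightarrow> (nat \<Rightarrow> real) \<Rightarrow> nat \<Rightarrow> real" where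
  "matvec n C x i = (\<Sum>j<n. C i j * x j)"

abbreviation qform :: "nat \<Rightarrow> (nat \<Rightarrow> nat \<Rightarrow> real) \<Rightarrow> (nat \<Rightarrow> real) \<Rightarrow> real" where
  "qform n C x \<equiv> dot n x (matvec n C x)"

abbreviation entry :: "real mat \<Rightarrow> nat \<Rightarrow> nat \<Rightarrow> real" where
  "entry A i j \<equiv> A $$ (i, j)"

lemma dot_commute: "dot n x y = dot n y x"
  by (simp add: dot_def mult.commute)

lemma dot_add_scaled_left: "dot n (\<lambda>i. x i + t * y i) z = dot n x z + t * dot n y z"
  by (simp add: dot_def algebra_simps sum.distrib sum_distrib_left)

lemma dot_add_scaled_right: "dot n z (\<lambda>i. x i + t * y i) = dot n z x + t * dot n z y"
  by (simp add: dot_def algebra_simps sum.distrib sum_distrib_left)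

lemma dot_scale: "dot n (\<lambda>i. c * x i) (\<lambda>i. c * y i) = c\<^sup>2 * dot n x y"
  by (simp add: dot_def algebra_simps sum_distrib_left power2_eq_square)

lemma dot_self_nonneg: "0 \<le> dot n x x"
  by (simp add: dot_def sum_nonneg)

lemma dot_cong:
  "(\<And>i. i < n \<Longrightarrow> x i = x' i) \<Longrightarrow> (\<And>i. i < n \<Longrightarrow> y i = y' i) \<Longrightarrow> dot n x y = dot n x' y'"
  by (simp add: dot_def)

lemma matvec_add_scaled:
  "matvec n C (\<lambda>i. x i + t * y i) = (\<lambda>i. matvec n C x i + t * matvec n C y i)"
  by (simp add: matvec_def algebra_simps sum.distrib sum_distrib_left fun_eq_iff)

lemma matvec_scale: "matvec n C (\<lambda>i. c * x i) = (\<lambda>i. c * matvec n C x i)"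
  by (simp add: matvec_def algebra_simps sum_distrib_left fun_eq_iff)

lemma dot_matvec_commute:
  assumes "\<And>i j. i < n \<Longrightarrow> j < n \<Longrightarrow> C i j = C j i"
  shows "dot n x (matvec n C y) = dot n y (matvec n C x)"
proof -
  have "dot n x (matvec n C y) = (\<Sum>i<n. \<Sum>j<n. x i * C i j * y j)"
    by (simp add: dot_def matvec_def sum_distrib_left mult.assoc)
  also have "\<dots> = (\<Sum>j<n. \<Sum>i<n. y j * C j i * x i)"
    using assms by (subst sum.swap) (auto intro!: sum.cong simp: mult.commute mult.left_commute)
  also have "\<dots> = dot n y (matvec n C x)"
    by (simp add: dot_def matvec_def sum_distrib_left mult.assoc)
  finally show ?thesis .
qed

lemma qform_add_scaled:
  assumes "\<And>i j. i < n \<Longrightarrow> j < n \<Longrightarrow> C i j = C j i"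
  shows "qform n C (\<lambda>i. x i + t * y i)
           = qform n C x + 2 * t * dot n y (matvec n C x) + t\<^sup>2 * qform n C y"
proof -
  have "qform n C (\<lambda>i. x i + t * y i)
          = qform n C x + t * dot n x (matvec n C y) + t * (dot n y (matvec n C x) + t * qform n C y)"
    by (simp add: matvec_add_scaled dot_add_scaled_left dot_add_scaled_right)
  then show ?thesis
    using dot_matvec_commute[OF assms, where x=x and y=y] by (simp add: algebra_simps power2_eq_square)
qed

lemma discriminant_le_of_nonneg:
  fixes a b c :: real
  assumes nonneg: "\<And>t. 0 \<le> a + 2 * b * t + c * t\<^sup>2" and "0 \<le> c"
  shows "b\<^sup>2 \<le> a * c"
proof (cases "c = 0")
  case True
  have "b = 0"
  proof (rule ccontr)
    assume "b \<noteq> 0"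
    with True nonneg[of "- (a + 1) / (2 * b)"] show False by (simp add: field_simps)
  qed
  with True show ?thesis by simp
next
  case False
  with \<open>0 \<le> c\<close> have "0 < c" by simp
  have "0 \<le> a + 2 * b * (- b / c) + c * (- b / c)\<^sup>2" by (rule nonneg)
  also have "\<dots> = a - b\<^sup>2 / c" using \<open>0 < c\<close> by (simp add: field_simps power2_eq_square)
  finally show ?thesis using \<open>0 < c\<close> by (simp add: field_simps mult.commute)
qed

lemma dot_Cauchy_Schwarz: "(dot n x y)\<^sup>2 \<le> dot n x x * dot n y y"
proof (rule discriminant_le_of_nonneg[OF _ dot_self_nonneg])
  fix t
  have "0 \<le> dot n (\<lambda>i. x i + t * y i) (\<lambda>i. x i + t * y i)" by (rule dot_self_nonneg)
  then show "0 \<le> dot n x x + 2 * dot n x y * t + dot n y y * t\<^sup>2"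
    by (simp add: dot_add_scaled_left dot_add_scaled_right dot_commute[of n y x]
        algebra_simps power2_eq_square)
qed

lemma psd_Cauchy_Schwarz:
  assumes sym: "\<And>i j. i < n \<Longrightarrow> j < n \<Longrightarrow> C i j = C j i"
    and psd: "\<And>z. 0 \<le> qform n C z"
  shows "(dot n y (matvec n C x))\<^sup>2 \<le> qform n C x * qform n C y"
proof (rule discriminant_le_of_nonneg[OF _ psd])
  fix t
  show "0 \<le> qform n C x + 2 * dot n y (matvec n C x) * t + qform n C y * t\<^sup>2"
    using psd[of "\<lambda>i. x i + t * y i"] by (simp add: qform_add_scaled[OF sym] algebra_simps)
qed

lemma abs_qform_le: "\<bar>qform n C x\<bar> \<le> (\<Sum>i<n. \<Sum>j<n. \<bar>C i j\<bar>) * dot n x x"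
proof -
  have sq_le: "(x i)\<^sup>2 \<le> dot n x x" if "i < n" for i
    unfolding dot_def power2_eq_square using that by (intro member_le_sum) auto
  have prod_le: "\<bar>x i * x j\<bar> \<le> dot n x x" if "i < n" "j < n" for i j
  proof -
    have "2 * \<bar>x i * x j\<bar> \<le> (x i)\<^sup>2 + (x j)\<^sup>2"
      using sum_squares_bound[of "\<bar>x i\<bar>" "\<bar>x j\<bar>"] by (simp add: abs_mult)
    with sq_le[OF that(1)] sq_le[OF that(2)] show ?thesis by simp
  qed
  have "\<bar>qform n C x\<bar> = \<bar>\<Sum>i<n. \<Sum>j<n. C i j * (x i * x j)\<bar>"
    by (simp add: dot_def matvec_def sum_distrib_left algebra_simps)
  also have "\<dots> \<le> (\<Sum>i<n. \<Sum>j<n. \<bar>C i j\<bar> * \<bar>x i * x j\<bar>)"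
    by (rule order_trans[OF sum_abs sum_mono]) (auto intro: order_trans[OF sum_abs] simp: abs_mult)
  also have "\<dots> \<le> (\<Sum>i<n. \<Sum>j<n. \<bar>C i j\<bar> * dot n x x)"
    by (intro sum_mono mult_left_mono prod_le) auto
  finally show ?thesis by (simp add: sum_distrib_right)
qed

lemma dot_matvec_self_le:
  "dot n (matvec n D z) (matvec n D z) \<le> (\<Sum>i<n. \<Sum>j<n. (D i j)\<^sup>2) * dot n z z"
proof -
  have "dot n (matvec n D z) (matvec n D z) = (\<Sum>i<n. (dot n (D i) z)\<^sup>2)"
    by (simp add: dot_def matvec_def power2_eq_square)
  also have "\<dots> \<le> (\<Sum>i<n. dot n (D i) (D i) * dot n z z)"
    by (intro sum_mono dot_Cauchy_Schwarz)
  finally show ?thesis by (simp add: dot_def sum_distrib_right power2_eq_square)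
qed

lemma abs_dot_le:
  assumes "\<And>i. i < n \<Longrightarrow> \<bar>y i\<bar> \<le> c"
  shows "\<bar>dot n x y\<bar> \<le> (\<Sum>i<n. \<bar>x i\<bar>) * c"
proof -
  have "\<bar>dot n x y\<bar> \<le> (\<Sum>i<n. \<bar>x i\<bar> * \<bar>y i\<bar>)"
    unfolding dot_def by (rule order_trans[OF sum_abs]) (simp add: abs_mult)
  also have "\<dots> \<le> (\<Sum>i<n. \<bar>x i\<bar> * c)"
    by (intro sum_mono mult_left_mono assms) auto
  finally show ?thesis by (simp add: sum_distrib_right)
qed

section \<open>The Rayleigh bound\<close>

lemma bdd_below_unit_qform: "bdd_below {qform n C x | x. dot n x x = 1}"
proof (rule bdd_belowI)
  fix q assume "q \<in> {qform n C x | x. dot n x x = 1}"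
  then obtain x where "dot n x x = 1" "q = qform n C x" by blast
  with abs_qform_le[where n=n and C=C and x=x] show "- (\<Sum>i<n. \<Sum>j<n. \<bar>C i j\<bar>) \<le> q" by simp
qed

lemma Inf_unit_qform_scaled_le:
  "Inf {qform n C y | y. dot n y y = 1} * dot n x x \<le> qform n C x"
proof (cases "dot n x x = 0")
  case True
  with abs_qform_le[where n=n and C=C and x=x] show ?thesis by simp
next
  case False
  with dot_self_nonneg[of n x] have pos: "0 < dot n x x" by simp
  define r where "r = 1 / sqrt (dot n x x)"
  have r2: "r\<^sup>2 * dot n x x = 1" using pos by (simp add: r_def power_divide)
  have "Inf {qform n C y | y. dot n y y = 1} \<le> qform n C (\<lambda>i. r * x i)"
    using r2 by (intro cInf_lower[OF _ bdd_below_unit_qform]) (auto simp: dot_scale)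
  also have "\<dots> = r\<^sup>2 * qform n C x" by (simp add: matvec_scale dot_scale)
  finally have "Inf {qform n C y | y. dot n y y = 1} * dot n x x \<le> r\<^sup>2 * qform n C x * dot n x x"
    using pos by (intro mult_right_mono) simp_all
  also have "\<dots> = qform n C x" using r2 by (simp add: algebra_simps)
  finally show ?thesis .
qed

lemma psd_left_invertible_coercive:
  assumes sym: "\<And>i j. i < n \<Longrightarrow> j < n \<Longrightarrow> C i j = C j i"
    and psd: "\<And>z. 0 \<le> qform n C z"
    and left_inv: "\<And>x i. i < n \<Longrightarrow> x i = matvec n D (matvec n C x) i"
  shows "dot n x x \<le> (\<Sum>i<n. \<Sum>j<n. (D i j)\<^sup>2) * (\<Sum>i<n. \<Sum>j<n. \<bar>C i j\<bar>) * qform n C x"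
proof -
  define L where "L = (\<Sum>i<n. \<Sum>j<n. (D i j)\<^sup>2)"
  define K where "K = (\<Sum>i<n. \<Sum>j<n. \<bar>C i j\<bar>)"
  define z where "z = matvec n C x"
  have "0 \<le> L" "0 \<le> K" by (auto simp: L_def K_def intro!: sum_nonneg)
  have "dot n x x = dot n (matvec n D z) (matvec n D z)"
    using left_inv by (intro dot_cong) (auto simp: z_def)
  also have "\<dots> \<le> L * dot n z z" unfolding L_def by (rule dot_matvec_self_le)
  finally have x_le: "dot n x x \<le> L * dot n z z" .
  have "(dot n z z)\<^sup>2 \<le> qform n C x * qform n C z"
    using psd_Cauchy_Schwarz[OF sym psd, where x=x and y=z] by (simp add: z_def)
  also have "\<dots> \<le> qform n C x * (K * dot n z z)"
    using abs_qform_le[where n=n and C=C and x=z] psd[of x] by (intro mult_left_mono) (auto simp: K_def)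
  finally have "dot n z z \<le> K * qform n C x"
    using dot_self_nonneg[of n z] mult_nonneg_nonneg[OF \<open>0 \<le> K\<close> psd[of x]]
    by (cases "dot n z z = 0") (auto simp: power2_eq_square algebra_simps)
  with x_le \<open>0 \<le> L\<close> show ?thesis
    unfolding L_def[symmetric] K_def[symmetric]
    by (metis mult.assoc mult_left_mono order_trans)
qed

lemma mult_mat_vec_matvec:
  assumes "A \<in> carrier_mat m n" "i < m"
  shows "(A *\<^sub>v vec n x) $ i = matvec n (entry A) x i"
  using assms by (auto simp: scalar_prod_def matvec_def lessThan_atLeast0 intro!: sum.cong)

lemma scalar_prod_dot: "y \<in> carrier_vec n \<Longrightarrow> x \<bullet> y = dot n (($) x) (($) y)"
  by (auto simp: scalar_prod_def dot_def lessThan_atLeast0)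

lemma matvec_one_mat: "i < n \<Longrightarrow> matvec n (entry (1\<^sub>m n)) x i = x i"
  unfolding matvec_def by (subst sum.cong[OF refl, of _ _ "\<lambda>j. if j = i then x j else 0"]) auto

lemma matvec_mult_mat:
  assumes D: "D \<in> carrier_mat n n" and C: "C \<in> carrier_mat n n" and "i < n"
  shows "matvec n (entry (D * C)) x i = matvec n (entry D) (matvec n (entry C) x) i"
proof -
  have "C *\<^sub>v vec n x = vec n (matvec n (entry C) x)"
    by (intro eq_vecI) (use C mult_mat_vec_matvec[OF C] in auto)
  then have "(D * C) *\<^sub>v vec n x = D *\<^sub>v vec n (matvec n (entry C) x)"
    using D C by simp
  then show ?thesis
    using D C \<open>i < n\<close> mult_mat_vec_matvec[of "D * C" n n i x]
      mult_mat_vec_matvec[of D n n i "matvec n (entry C) x"] by simp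
qed

lemma matvec_char_matrix:
  assumes "A \<in> carrier_mat n n" "i < n"
  shows "matvec n (entry (char_matrix A e)) x i = matvec n (entry A) x i - e * x i"
proof -
  have "matvec n (entry (char_matrix A e)) x i
          = (\<Sum>j<n. A $$ (i, j) * x j - (if j = i then e * x j else 0))"
    using assms by (auto simp: matvec_def char_matrix_def algebra_simps intro!: sum.cong)
  also have "\<dots> = matvec n (entry A) x i - e * x i"
    using assms by (simp add: sum_subtractf matvec_def)
  finally show ?thesis .
qed

lemma left_inverse_char_matrix:
  assumes A: "A \<in> carrier_mat n n" and "\<not> eigenvalue A e"
  obtains D where "D \<in> carrier_mat n n" "D * char_matrix A e = 1\<^sub>m n"
proof -
  have "det (char_matrix A e) \<noteq> 0" using assms eigenvalue_det[OF A] by simp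
  from det_non_zero_imp_unit[OF char_matrix_closed[OF A] this, of undefined]
  show ?thesis using that unfolding Units_def ring_mat_def by auto
qed

lemma Inf_not_uniformly_above:
  fixes U :: "real set"
  assumes "U \<noteq> {}" and "bdd_below U" and "0 \<le> P"
    and above: "\<And>q. q \<in> U \<Longrightarrow> 1 \<le> P * (q - Inf U)"
  shows False
proof -
  have "Inf U < Inf U + 1 / (P + 1)" using \<open>0 \<le> P\<close> by simp
  then obtain q where q: "q \<in> U" "q < Inf U + 1 / (P + 1)"
    using cInf_less_iff[OF assms(1,2)] by blast
  have "0 \<le> q - Inf U" using cInf_lower[OF q(1) assms(2)] by simp
  have "1 \<le> P * (q - Inf U)" by (rule above[OF q(1)])
  also have "\<dots> \<le> (P + 1) * (q - Inf U)" using \<open>0 \<le> q - Inf U\<close> by (simp add: algebra_simps)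
  also have "\<dots> < 1" using q(2) \<open>0 \<le> P\<close> by (simp add: field_simps)
  finally show False by simp
qed

text \<open>
  If the infimum m of the quadratic form on the unit sphere were not an eigenvalue, A - m I would
  be invertible; being positive semidefinite it would then be coercive, keeping the quadratic form
  of A a fixed amount above m on the whole unit sphere.
\<close>

lemma Inf_unit_qform_eigenvalue:
  assumes A: "A \<in> carrier_mat n n" and sym: "transpose_mat A = A" and "0 < n"
  shows "eigenvalue A (Inf {qform n (entry A) x | x. dot n x x = 1})"
proof (rule ccontr)
  define U where "U = {qform n (entry A) x | x. dot n x x = 1}"
  define m where "m = Inf U"
  assume "\<not> eigenvalue A (Inf {qform n (entry A) x | x. dot n x x = 1})"
  then obtain D where D: "D \<in> carrier_mat n n" "D * char_matrix A m = 1\<^sub>m n"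
    using left_inverse_char_matrix[OF A] unfolding m_def U_def by blast
  let ?C = "entry (char_matrix A m)"
  have symC: "?C i j = ?C j i" if "i < n" "j < n" for i j
    using A that arg_cong[OF sym, of "\<lambda>B. B $$ (i, j)"] by (auto simp: char_matrix_def)
  have qform_C: "qform n ?C z = qform n (entry A) z - m * dot n z z" for z
  proof -
    have "qform n ?C z = dot n z (\<lambda>i. matvec n (entry A) z i + (- m) * z i)"
      using A by (intro dot_cong) (auto simp: matvec_char_matrix)
    then show ?thesis by (simp add: dot_def algebra_simps sum_subtractf sum_distrib_left)
  qed
  have psd: "0 \<le> qform n ?C z" for z
    using Inf_unit_qform_scaled_le[of n "entry A" z] unfolding qform_C by (simp add: m_def U_def)
  have left_inv: "x i = matvec n (entry D) (matvec n ?C x) i" if "i < n" for x i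
    using D A that by (simp add: matvec_mult_mat[symmetric] matvec_one_mat)
  define P where "P = (\<Sum>i<n. \<Sum>j<n. (D $$ (i, j))\<^sup>2) * (\<Sum>i<n. \<Sum>j<n. \<bar>?C i j\<bar>)"
  have "0 \<le> P" unfolding P_def by (intro mult_nonneg_nonneg sum_nonneg) auto
  have "(\<lambda>i. if i = 0 then 1 else 0) \<in> {x. dot n x x = 1}"
    using \<open>0 < n\<close> by (simp add: dot_def if_distrib cong: if_cong)
  then have "U \<noteq> {}" by (auto simp: U_def)
  then show False
  proof (rule Inf_not_uniformly_above[OF _ _ \<open>0 \<le> P\<close>])
    show "bdd_below U" unfolding U_def by (rule bdd_below_unit_qform)
    fix q assume "q \<in> U"
    then obtain y where "dot n y y = 1" "q = qform n (entry A) y" unfolding U_def by blast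
    then show "1 \<le> P * (q - Inf U)"
      using psd_left_invertible_coercive[OF symC psd left_inv, of y]
      by (simp add: P_def qform_C m_def[symmetric])
  qed
qed

lemma rayleigh_lower_bound:
  fixes A :: "real mat" and v :: "real vec"
  assumes A: "A \<in> carrier_mat n n" and sym: "transpose_mat A = A"
    and eig: "\<And>e. eigenvalue A e \<Longrightarrow> \<mu> \<le> e" and v: "v \<in> carrier_vec n"
  shows "\<mu> * (v \<bullet> v) \<le> v \<bullet> (A *\<^sub>v v)"
proof -
  have "\<mu> * dot n (($) v) (($) v) \<le> qform n (entry A) (($) v)"
  proof (cases "n = 0")
    case True
    then show ?thesis by (simp add: dot_def)
  next
    case False
    with eig Inf_unit_qform_eigenvalue[OF A sym]
    have "\<mu> \<le> Inf {qform n (entry A) x | x. dot n x x = 1}" by simp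
    then have "\<mu> * dot n (($) v) (($) v) \<le> Inf {qform n (entry A) x | x. dot n x x = 1} * dot n (($) v) (($) v)"
      by (rule mult_right_mono) (rule dot_self_nonneg)
    also have "\<dots> \<le> qform n (entry A) (($) v)" by (rule Inf_unit_qform_scaled_le)
    finally show ?thesis .
  qed
  moreover have "v \<bullet> (A *\<^sub>v v) = qform n (entry A) (($) v)"
  proof -
    have "v = vec n (($) v)" using v by auto
    then have "(A *\<^sub>v v) $ i = matvec n (entry A) (($) v) i" if "i < n" for i
      using mult_mat_vec_matvec[OF A that, of "($) v"] by simp
    moreover have "v \<bullet> (A *\<^sub>v v) = dot n (($) v) (($) (A *\<^sub>v v))"
      using A v by (intro scalar_prod_dot) auto
    ultimately show ?thesis by (auto intro: dot_cong)
  qed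
  ultimately show ?thesis using v by (simp add: scalar_prod_dot[of _ n])
qed

lemma eigenvalue_nonzero_if_invertible:
  assumes A: "A \<in> carrier_mat n n" and B: "B \<in> carrier_mat n n" and BA: "B * A = 1\<^sub>m n"
    and "eigenvalue A e"
  shows "e \<noteq> 0"
proof
  assume "e = 0"
  with \<open>eigenvalue A e\<close> obtain v where v: "v \<in> carrier_vec n" "v \<noteq> 0\<^sub>v n" "A *\<^sub>v v = 0 \<cdot>\<^sub>v v"
    using A unfolding eigenvalue_def eigenvector_def by auto
  have Av: "A *\<^sub>v v = 0\<^sub>v n" unfolding v(3) using v(1) by (intro eq_vecI) auto
  have "v = (B * A) *\<^sub>v v" using BA v by simp
  also have "\<dots> = B *\<^sub>v (A *\<^sub>v v)" using A B v by simp
  also have "\<dots> = 0\<^sub>v n" unfolding Av using B by (intro eq_vecI) auto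
  finally show False using v(2) by simp
qed

lemma vnorm_inf_nonneg: "0 \<le> vnorm_inf v"
  unfolding vnorm_inf_def by (rule Max_ge_iff[THEN iffD2]) (auto simp: setcompr_eq_image)

lemma vnorm_inf_ge: "i < dim_vec v \<Longrightarrow> \<bar>v $ i\<bar> \<le> vnorm_inf v"
  unfolding vnorm_inf_def by (rule Max_ge) (auto simp: setcompr_eq_image)

lemma vnorm_inf_le: "(\<And>i. i < dim_vec v \<Longrightarrow> \<bar>v $ i\<bar> \<le> c) \<Longrightarrow> 0 \<le> c \<Longrightarrow> vnorm_inf v \<le> c"
  unfolding vnorm_inf_def by (rule Max.boundedI) (auto simp: setcompr_eq_image)

lemma abs_scalar_prod_le_vnorm:
  assumes "x \<in> carrier_vec (dim_vec y)"
  shows "\<bar>x \<bullet> y\<bar> \<le> vnorm_1 x * vnorm_inf y"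
  using assms abs_dot_le[of "dim_vec y" "($) y" "vnorm_inf y" "($) x"] vnorm_inf_ge[of _ y]
  by (auto simp: scalar_prod_def dot_def vnorm_1_def lessThan_atLeast0)

section \<open>Regression of the first coordinate on the others\<close>

text \<open>
  S plays the role of Sigma, Theta of its inverse, and gamma0 solves the normal equations
  Sigma_{-1,-1} gamma0 = Sigma_{-1,1}. The paper's denominator 1 - gamma0' Sigma_{-1,-1} g is
  tau_sq g; tau_sq gamma0 is the residual variance of x_1 given x_{-1}.
\<close>

locale partial_regression =
  fixes k :: nat and S \<Theta> :: "real mat" and \<gamma>\<^sub>0 :: "real vec"
  assumes S_carrier: "S \<in> carrier_mat (Suc k) (Suc k)"
    and S_sym: "transpose_mat S = S"
    and S_00: "S $$ (0, 0) = 1"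
    and S_psd: "\<And>v. v \<in> carrier_vec (Suc k) \<Longrightarrow> 0 \<le> v \<bullet> (S *\<^sub>v v)"
    and Theta_carrier: "\<Theta> \<in> carrier_mat (Suc k) (Suc k)"
    and S_Theta: "S * \<Theta> = 1\<^sub>m (Suc k)"
    and Theta_S: "\<Theta> * S = 1\<^sub>m (Suc k)"
    and gamma0_carrier: "\<gamma>\<^sub>0 \<in> carrier_vec k"
    and normal_eq: "sub_mm S *\<^sub>v \<gamma>\<^sub>0 = sub_m1 S"
begin

definition tau_sq :: "real vec \<Rightarrow> real" where
  "tau_sq g = 1 - \<gamma>\<^sub>0 \<bullet> (sub_mm S *\<^sub>v g)"

definition normal_residual :: "real vec \<Rightarrow> real vec" where
  "normal_residual g = sub_mm S *\<^sub>v (g - \<gamma>\<^sub>0)"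

lemma sub_mm_carrier: "sub_mm S \<in> carrier_mat k k"
  using S_carrier by (simp add: sub_mm_def)

lemma sub_m1_carrier: "sub_m1 S \<in> carrier_vec k"
  using S_carrier by (simp add: sub_m1_def)

lemma S_entry_sym: "i < Suc k \<Longrightarrow> j < Suc k \<Longrightarrow> S $$ (j, i) = S $$ (i, j)"
  using S_carrier arg_cong[OF S_sym, of "\<lambda>B. B $$ (i, j)"] by simp

lemma sub_mm_sym: "transpose_mat (sub_mm S) = sub_mm S"
  using S_carrier by (intro eq_matI) (auto simp: sub_mm_def S_entry_sym)

lemma row_S_0: "row S 0 = vCons 1 (sub_m1 S)"
  using S_carrier S_00 by (intro eq_vecI) (auto simp: vec_index_vCons sub_m1_def S_entry_sym)

lemma row_S_Suc: "i < k \<Longrightarrow> row S (Suc i) = vCons (sub_m1 S $ i) (row (sub_mm S) i)"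
  using S_carrier by (intro eq_vecI) (auto simp: vec_index_vCons sub_m1_def sub_mm_def)

lemma S_mult_vCons:
  assumes "v \<in> carrier_vec k"
  shows "S *\<^sub>v vCons a v = vCons (a + sub_m1 S \<bullet> v) (a \<cdot>\<^sub>v sub_m1 S + sub_mm S *\<^sub>v v)"
proof (rule eq_vecI)
  fix i assume "i < dim_vec (vCons (a + sub_m1 S \<bullet> v) (a \<cdot>\<^sub>v sub_m1 S + sub_mm S *\<^sub>v v))"
  then have "i < Suc k" using sub_mm_carrier sub_m1_carrier by simp
  then show "(S *\<^sub>v vCons a v) $ i = vCons (a + sub_m1 S \<bullet> v) (a \<cdot>\<^sub>v sub_m1 S + sub_mm S *\<^sub>v v) $ i"
    using S_carrier sub_mm_carrier sub_m1_carrier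
    by (cases i) (auto simp: row_S_0 row_S_Suc)
qed (use S_carrier sub_mm_carrier in simp)

lemma S_mult_direction:
  assumes g: "g \<in> carrier_vec k"
  shows "S *\<^sub>v vCons 1 (- g) = vCons (tau_sq g) (- normal_residual g)"
proof -
  have "sub_m1 S \<bullet> g = \<gamma>\<^sub>0 \<bullet> (sub_mm S *\<^sub>v g)"
    using transpose_vec_mult_scalar[OF sub_mm_carrier g gamma0_carrier]
    by (simp add: sub_mm_sym normal_eq)
  moreover have "sub_m1 S + sub_mm S *\<^sub>v (- g) = - normal_residual g"
    unfolding normal_residual_def normal_eq[symmetric] using sub_mm_carrier g gamma0_carrier
    by (intro eq_vecI) (auto simp: scalar_prod_uminus_right scalar_prod_minus_distrib[of _ k])
  ultimately show ?thesis
    using g sub_m1_carrier by (simp add: S_mult_vCons tau_sq_def)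
qed

lemma dim_normal_residual [simp]: "dim_vec (normal_residual g) = k"
  using S_carrier by (simp add: normal_residual_def sub_mm_def)

lemma normal_residual_carrier: "normal_residual g \<in> carrier_vec k"
  by (rule carrier_vecI) simp

lemma normal_residual_gamma0: "normal_residual \<gamma>\<^sub>0 = 0\<^sub>v k"
  unfolding normal_residual_def using sub_mm_carrier gamma0_carrier by (intro eq_vecI) auto

lemma S_mult_direction_gamma0: "S *\<^sub>v vCons 1 (- \<gamma>\<^sub>0) = vCons (tau_sq \<gamma>\<^sub>0) (0\<^sub>v k)"
  using S_mult_direction[OF gamma0_carrier] by (simp add: normal_residual_gamma0)

lemma Theta_00: "\<Theta> $$ (0, 0) * tau_sq \<gamma>\<^sub>0 = 1"
proof -
  have "vCons 1 (- \<gamma>\<^sub>0) = (\<Theta> * S) *\<^sub>v vCons 1 (- \<gamma>\<^sub>0)"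
    using Theta_S gamma0_carrier by simp
  also have "\<dots> = \<Theta> *\<^sub>v vCons (tau_sq \<gamma>\<^sub>0) (0\<^sub>v k)"
    using Theta_carrier S_carrier gamma0_carrier by (simp add: S_mult_direction_gamma0)
  finally have "1 = (\<Theta> *\<^sub>v vCons (tau_sq \<gamma>\<^sub>0) (0\<^sub>v k)) $ 0"
    by (metis vec_index_vCons_0)
  also have "\<dots> = row \<Theta> 0 \<bullet> vCons (tau_sq \<gamma>\<^sub>0) (0\<^sub>v k)"
    using Theta_carrier by simp
  also have "row \<Theta> 0 = vCons (\<Theta> $$ (0, 0)) (vec k (\<lambda>j. \<Theta> $$ (0, Suc j)))"
    using Theta_carrier by (intro eq_vecI) (auto simp: vec_index_vCons)
  finally show ?thesis by simp
qed

lemma tau_sq_gamma0_ge: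
  assumes "0 \<le> \<mu>" and rayleigh: "\<And>v. v \<in> carrier_vec (Suc k) \<Longrightarrow> \<mu> * (v \<bullet> v) \<le> v \<bullet> (S *\<^sub>v v)"
  shows "\<mu> \<le> tau_sq \<gamma>\<^sub>0"
proof -
  let ?d = "vCons 1 (- \<gamma>\<^sub>0)"
  have "0 \<le> (- \<gamma>\<^sub>0) \<bullet> (- \<gamma>\<^sub>0)"
    using gamma0_carrier by (simp add: scalar_prod_dot[of _ k] dot_self_nonneg)
  then have "1 \<le> ?d \<bullet> ?d" by simp
  then have "\<mu> \<le> \<mu> * (?d \<bullet> ?d)" using \<open>0 \<le> \<mu>\<close> by (metis mult.right_neutral mult_left_mono)
  also have "\<dots> \<le> ?d \<bullet> (S *\<^sub>v ?d)" using gamma0_carrier by (intro rayleigh) simp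
  also have "\<dots> = tau_sq \<gamma>\<^sub>0" using gamma0_carrier by (simp add: S_mult_direction_gamma0)
  finally show ?thesis .
qed

lemma normal_residual_inner_nonneg:
  assumes g: "g \<in> carrier_vec k"
  shows "0 \<le> (g - \<gamma>\<^sub>0) \<bullet> normal_residual g"
proof -
  let ?d = "g - \<gamma>\<^sub>0"
  have d: "?d \<in> carrier_vec k" using g gamma0_carrier by simp
  have "0 \<le> vCons 0 ?d \<bullet> (S *\<^sub>v vCons 0 ?d)" using d by (intro S_psd) simp
  also have "\<dots> = ?d \<bullet> (0 \<cdot>\<^sub>v sub_m1 S + sub_mm S *\<^sub>v ?d)" using d by (simp add: S_mult_vCons)
  also have "0 \<cdot>\<^sub>v sub_m1 S + sub_mm S *\<^sub>v ?d = normal_residual g"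
    unfolding normal_residual_def using sub_m1_carrier sub_mm_carrier by (intro eq_vecI) auto
  finally show ?thesis .
qed

lemma tau_sq_eq:
  assumes g: "g \<in> carrier_vec k"
  shows "tau_sq g = tau_sq \<gamma>\<^sub>0 - \<gamma>\<^sub>0 \<bullet> normal_residual g"
  using g gamma0_carrier sub_mm_carrier
  by (simp add: tau_sq_def normal_residual_def mult_minus_distrib_mat_vec
      scalar_prod_minus_distrib[of _ k])

lemma tau_sq_lower:
  assumes g: "g \<in> carrier_vec k"
  shows "tau_sq \<gamma>\<^sub>0 - vnorm_1 g * vnorm_inf (normal_residual g) \<le> tau_sq g"
proof -
  have "\<gamma>\<^sub>0 \<bullet> normal_residual g = g \<bullet> normal_residual g - (g - \<gamma>\<^sub>0) \<bullet> normal_residual g"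
    using g gamma0_carrier normal_residual_carrier by (simp add: minus_scalar_prod_distrib)
  also have "\<dots> \<le> g \<bullet> normal_residual g" using normal_residual_inner_nonneg[OF g] by simp
  also have "\<dots> \<le> vnorm_1 g * vnorm_inf (normal_residual g)"
    using abs_scalar_prod_le_vnorm[of g "normal_residual g"] g by simp
  finally show ?thesis using tau_sq_eq[OF g] by linarith
qed

lemma tau_sq_upper:
  assumes g: "g \<in> carrier_vec k"
  shows "tau_sq g \<le> tau_sq \<gamma>\<^sub>0 + vnorm_1 \<gamma>\<^sub>0 * vnorm_inf (normal_residual g)"
proof -
  have "\<bar>\<gamma>\<^sub>0 \<bullet> normal_residual g\<bar> \<le> vnorm_1 \<gamma>\<^sub>0 * vnorm_inf (normal_residual g)"
    using abs_scalar_prod_le_vnorm[of \<gamma>\<^sub>0 "normal_residual g"] gamma0_carrier by simp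
  then show ?thesis using tau_sq_eq[OF g] abs_ge_minus_self[of "\<gamma>\<^sub>0 \<bullet> normal_residual g"] by linarith
qed

lemma theta_sharp_eq:
  assumes g: "g \<in> carrier_vec k"
  shows "theta_sharp S \<gamma>\<^sub>0 g = (1 / tau_sq g) \<cdot>\<^sub>v vCons 1 (- g)"
  using S_carrier g by (auto simp: theta_sharp_def tau_sq_def vec_index_vCons)

lemma theta_sharp_0: "theta_sharp S \<gamma>\<^sub>0 g $ 0 = 1 / tau_sq g"
  using S_carrier by (simp add: theta_sharp_def tau_sq_def)

text \<open>No positivity of tau_sq g is needed: if it vanishes, both sides are 0 because x / 0 = 0.\<close>

lemma theta_sharp_qform:
  assumes g: "g \<in> carrier_vec k"
  shows "theta_sharp S \<gamma>\<^sub>0 g \<bullet> (S *\<^sub>v theta_sharp S \<gamma>\<^sub>0 g) - theta_sharp S \<gamma>\<^sub>0 g $ 0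
           = (g \<bullet> normal_residual g) / (tau_sq g)\<^sup>2"
proof -
  have "theta_sharp S \<gamma>\<^sub>0 g \<bullet> (S *\<^sub>v theta_sharp S \<gamma>\<^sub>0 g)
          = (1 / tau_sq g)\<^sup>2 * (vCons 1 (- g) \<bullet> vCons (tau_sq g) (- normal_residual g))"
    using S_carrier g by (simp add: theta_sharp_eq mult_mat_vec S_mult_direction power2_eq_square
        carrier_vecD)
  also have "vCons 1 (- g) \<bullet> vCons (tau_sq g) (- normal_residual g) = tau_sq g + g \<bullet> normal_residual g"
    using g by (simp add: carrier_vecD)
  also have "(1 / tau_sq g)\<^sup>2 * (tau_sq g + g \<bullet> normal_residual g)
               = 1 / tau_sq g + (g \<bullet> normal_residual g) / (tau_sq g)\<^sup>2"
  proof -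
    have "(1 / tau_sq g)\<^sup>2 * tau_sq g = 1 / tau_sq g"
      by (cases "tau_sq g = 0") (simp_all add: power2_eq_square)
    then show ?thesis by (simp add: distrib_left power_divide)
  qed
  finally show ?thesis by (simp add: theta_sharp_0)
qed

lemma theta_sharp_carrier: "theta_sharp S \<gamma>\<^sub>0 g \<in> carrier_vec (Suc k)"
  using S_carrier by (intro carrier_vecI) (simp add: theta_sharp_def)

lemma Sigma_theta_sharp_error:
  assumes g: "g \<in> carrier_vec k" and pos: "0 < tau_sq g"
  shows "vnorm_inf (S *\<^sub>v (theta_sharp S \<gamma>\<^sub>0 g - col \<Theta> 0)) \<le> vnorm_inf (normal_residual g) / tau_sq g"
proof -
  let ?r = "normal_residual g"
  have col: "col \<Theta> 0 \<in> carrier_vec (Suc k)" by (rule carrier_vecI) (use Theta_carrier in simp)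
  have "S *\<^sub>v col \<Theta> 0 = col (S * \<Theta>) 0"
    by (rule col_mult2[symmetric, OF S_carrier Theta_carrier]) simp
  then have S_col: "S *\<^sub>v col \<Theta> 0 = unit_vec (Suc k) 0" by (simp add: S_Theta)
  have S_theta: "S *\<^sub>v theta_sharp S \<gamma>\<^sub>0 g = (1 / tau_sq g) \<cdot>\<^sub>v vCons (tau_sq g) (- ?r)"
    using S_carrier g by (simp add: theta_sharp_eq mult_mat_vec S_mult_direction)
  have "S *\<^sub>v (theta_sharp S \<gamma>\<^sub>0 g - col \<Theta> 0) = S *\<^sub>v theta_sharp S \<gamma>\<^sub>0 g - S *\<^sub>v col \<Theta> 0"
    by (rule mult_minus_distrib_mat_vec[OF S_carrier theta_sharp_carrier col])
  also have "\<dots> = vCons 0 (- (1 / tau_sq g) \<cdot>\<^sub>v ?r)"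
    unfolding S_col S_theta using pos by (intro eq_vecI) (auto simp: vec_index_vCons)
  finally have eq: "S *\<^sub>v (theta_sharp S \<gamma>\<^sub>0 g - col \<Theta> 0) = vCons 0 (- (1 / tau_sq g) \<cdot>\<^sub>v ?r)" .
  show ?thesis unfolding eq
  proof (rule vnorm_inf_le)
    fix i assume i: "i < dim_vec (vCons 0 (- (1 / tau_sq g) \<cdot>\<^sub>v ?r))"
    show "\<bar>vCons 0 (- (1 / tau_sq g) \<cdot>\<^sub>v ?r) $ i\<bar> \<le> vnorm_inf ?r / tau_sq g"
    proof (cases i)
      case 0
      then show ?thesis using pos vnorm_inf_nonneg[of ?r] by simp
    next
      case (Suc j)
      with i have "j < dim_vec ?r" by simp
      then have "\<bar>?r $ j\<bar> / tau_sq g \<le> vnorm_inf ?r / tau_sq g"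
        using pos by (intro divide_right_mono vnorm_inf_ge) auto
      with Suc \<open>j < dim_vec ?r\<close> pos show ?thesis by (simp add: abs_mult)
    qed
  qed (use pos vnorm_inf_nonneg[of ?r] in simp)
qed

lemma eligible_pair_bounds:
  assumes g: "g \<in> carrier_vec k" and elig: "vnorm_inf (sub_mm S *\<^sub>v (g - \<gamma>\<^sub>0)) \<le> l"
  shows "tau_sq \<gamma>\<^sub>0 - l * vnorm_1 g \<le> tau_sq g"
    and "tau_sq g \<le> tau_sq \<gamma>\<^sub>0 + l * vnorm_1 \<gamma>\<^sub>0"
    and "0 < tau_sq g \<Longrightarrow> vnorm_inf (S *\<^sub>v (theta_sharp S \<gamma>\<^sub>0 g - col \<Theta> 0)) \<le> l / tau_sq g"
    and "\<bar>theta_sharp S \<gamma>\<^sub>0 g \<bullet> (S *\<^sub>v theta_sharp S \<gamma>\<^sub>0 g) - theta_sharp S \<gamma>\<^sub>0 g $ 0\<bar>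
           \<le> l * vnorm_1 g / (tau_sq g)\<^sup>2"
proof -
  have r: "vnorm_inf (normal_residual g) \<le> l" using elig by (simp add: normal_residual_def)
  have "0 \<le> vnorm_1 v" for v by (simp add: vnorm_1_def sum_nonneg)
  note scale = mult_left_mono[OF r this]
  show "tau_sq \<gamma>\<^sub>0 - l * vnorm_1 g \<le> tau_sq g"
    using tau_sq_lower[OF g] scale[of g] by (simp add: mult.commute)
  show "tau_sq g \<le> tau_sq \<gamma>\<^sub>0 + l * vnorm_1 \<gamma>\<^sub>0"
    using tau_sq_upper[OF g] scale[of \<gamma>\<^sub>0] by (simp add: mult.commute)
  show "0 < tau_sq g \<Longrightarrow> vnorm_inf (S *\<^sub>v (theta_sharp S \<gamma>\<^sub>0 g - col \<Theta> 0)) \<le> l / tau_sq g"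
    using Sigma_theta_sharp_error[OF g] r by (meson divide_right_mono less_imp_le order_trans)
  have "\<bar>g \<bullet> normal_residual g\<bar> \<le> vnorm_1 g * vnorm_inf (normal_residual g)"
    using abs_scalar_prod_le_vnorm[of g "normal_residual g"] g by simp
  then have bound: "\<bar>g \<bullet> normal_residual g\<bar> \<le> l * vnorm_1 g"
    using scale[of g] by (simp add: mult.commute)
  then show "\<bar>theta_sharp S \<gamma>\<^sub>0 g \<bullet> (S *\<^sub>v theta_sharp S \<gamma>\<^sub>0 g) - theta_sharp S \<gamma>\<^sub>0 g $ 0\<bar>
               \<le> l * vnorm_1 g / (tau_sq g)\<^sup>2"
    using divide_right_mono[OF bound zero_le_power2[of "tau_sq g"]]
    by (simp add: theta_sharp_qform[OF g] abs_divide)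
qed

end

lemma partial_regression_intro:
  assumes S: "S \<in> carrier_mat (Suc k) (Suc k)" and sym: "transpose_mat S = S"
    and "S $$ (0, 0) = 1" and eig_nonneg: "\<And>e. eigenvalue S e \<Longrightarrow> 0 \<le> e"
    and "\<Theta> \<in> carrier_mat (Suc k) (Suc k)" and "inverts_mat S \<Theta>" and "inverts_mat \<Theta> S"
    and "\<gamma>\<^sub>0 \<in> carrier_vec k" and "sub_mm S *\<^sub>v \<gamma>\<^sub>0 = sub_m1 S"
  shows "partial_regression k S \<Theta> \<gamma>\<^sub>0"
  unfolding partial_regression_def
  using assms rayleigh_lower_bound[OF S sym eig_nonneg] by (auto simp: inverts_mat_def)

section \<open>Sequences bounded away from zero\<close>

lemma eventually_lower_bound_of_inverse_bigo:
  fixes f :: "'a \<Rightarrow> real"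
  assumes "(\<lambda>x. 1 / f x) \<in> O[F](\<lambda>_. 1)" and "\<And>x. 0 < f x"
  shows "\<exists>c>0. \<forall>\<^sub>F x in F. c \<le> f x"
proof -
  from assms(1) obtain C where "C > 0" and "\<forall>\<^sub>F x in F. norm (1 / f x) \<le> C * norm (1::real)"
    by (rule landau_o.bigE)
  then have "\<forall>\<^sub>F x in F. 1 / C \<le> f x"
    by (auto elim!: eventually_mono simp: field_simps less_imp_le[OF assms(2)] assms(2))
  with \<open>C > 0\<close> show ?thesis by (intro exI[of _ "1 / C"]) simp
qed

lemma eventually_half_lower_bound:
  fixes a b e :: "'a \<Rightarrow> real"
  assumes "0 < c" and "\<forall>\<^sub>F x in F. c \<le> a x" and "(e \<longlongrightarrow> 0) F" and "\<And>x. a x - e x \<le> b x"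
  shows "\<forall>\<^sub>F x in F. c / 2 \<le> b x"
proof -
  have "\<forall>\<^sub>F x in F. e x < c / 2" using order_tendstoD(2)[OF assms(3), of "c / 2"] assms(1) by simp
  with assms(2) show ?thesis
  proof eventually_elim
    case (elim x)
    with assms(4)[of x] show ?case by linarith
  qed
qed

lemma bigo_divide_bounded_below:
  fixes f s :: "'a \<Rightarrow> real"
  assumes "0 < c" and "\<forall>\<^sub>F x in F. c \<le> s x"
  shows "(\<lambda>x. f x / s x) \<in> O[F](f)"
proof (rule bigoI)
  show "\<forall>\<^sub>F x in F. norm (f x / s x) \<le> (1 / c) * norm (f x)"
    using assms(2) by (rule eventually_mono)
      (use assms(1) in \<open>auto simp: field_simps intro: mult_right_mono\<close>)
qed

lemma tendsto_zero_divide_bounded_below: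
  fixes e s :: "'a \<Rightarrow> real"
  assumes "(e \<longlongrightarrow> 0) F" and "0 < c" and "\<forall>\<^sub>F x in F. c \<le> s x"
  shows "((\<lambda>x. e x / s x) \<longlongrightarrow> 0) F"
proof (rule tendsto_0_le[OF assms(1)])
  show "\<forall>\<^sub>F x in F. norm (e x / s x) \<le> norm (e x) * (1 / c)"
    using assms(3)
  proof eventually_elim
    case (elim x)
    then have "\<bar>e x\<bar> / s x \<le> \<bar>e x\<bar> / c" using assms(2) by (intro divide_left_mono) auto
    with elim assms(2) show ?case by (simp add: abs_divide)
  qed
qed

lemma inverse_le_inverse_add:
  fixes s t e :: real
  assumes "0 < s" and "0 < t" and "t - s \<le> e"
  shows "1 / s \<le> 1 / t + e / (s * t)"
proof -
  have "1 / s - 1 / t = (t - s) / (s * t)" using assms by (simp add: field_simps)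
  also have "\<dots> \<le> e / (s * t)" using assms by (intro divide_right_mono) auto
  finally show ?thesis by simp
qed

lemma inverse_perturbation_null:
  fixes s t e :: "'a \<Rightarrow> real"
  assumes "0 < c" and s: "\<forall>\<^sub>F x in F. c \<le> s x" and t: "\<forall>\<^sub>F x in F. c \<le> t x"
    and "(e \<longlongrightarrow> 0) F" and diff: "\<And>x. t x - s x \<le> e x"
  shows "\<exists>e'. (e' \<longlongrightarrow> 0) F \<and> (\<forall>\<^sub>F x in F. 1 / s x \<le> 1 / t x + e' x)"
proof (intro exI conjI)
  have "\<forall>\<^sub>F x in F. c * c \<le> s x * t x"
    using s t by eventually_elim (rule mult_mono, use \<open>0 < c\<close> in auto)
  from tendsto_zero_divide_bounded_below[OF \<open>(e \<longlongrightarrow> 0) F\<close> _ this]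
  show "((\<lambda>x. e x / (s x * t x)) \<longlongrightarrow> 0) F" using \<open>0 < c\<close> by simp
  show "\<forall>\<^sub>F x in F. 1 / s x \<le> 1 / t x + e x / (s x * t x)"
    using s t
  proof eventually_elim
    case (elim x)
    then have "0 < s x" "0 < t x" using \<open>0 < c\<close> by linarith+
    then show ?case by (rule inverse_le_inverse_add) (rule diff)
  qed
qed

lemma inverse_gap_le:
  fixes s t a :: "'a \<Rightarrow> real"
  assumes "0 < c" and "\<forall>\<^sub>F x in F. c \<le> s x" and "\<forall>\<^sub>F x in F. c \<le> t x"
    and "\<And>x. s x - t x \<le> a x" and "0 \<le> d" and "\<forall>\<^sub>F x in F. d \<le> 1 / t x - 1 / s x"
  shows "\<forall>\<^sub>F x in F. d * c\<^sup>2 \<le> a x"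
  using assms(2,3,6)
proof eventually_elim
  case (elim x)
  then have "0 < s x" "0 < t x" using \<open>0 < c\<close> by linarith+
  then have "d \<le> a x / (t x * s x)"
    using elim(3) inverse_le_inverse_add[of "t x" "s x" "a x"] assms(4)[of x] by simp
  then have "d * (t x * s x) \<le> a x" using \<open>0 < s x\<close> \<open>0 < t x\<close> by (simp add: field_simps)
  moreover have "d * c\<^sup>2 \<le> d * (t x * s x)"
    using elim \<open>0 < c\<close> \<open>0 \<le> d\<close> by (simp add: power2_eq_square mult_mono mult_left_mono)
  ultimately show ?case by linarith
qed

theorem lemma2p1:
  fixes p :: "nat \<Rightarrow> nat"
    and Sigma Theta :: "nat \<Rightarrow> real mat"
    and Lmin :: "nat \<Rightarrow> real"
    and gamma0 gs :: "nat \<Rightarrow> real vec"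
    and ls :: "nat \<Rightarrow> real"
  assumes p_pos: "\<And>n. p n \<ge> 1"
    and Sigma_carrier: "\<And>n. Sigma n \<in> carrier_mat (p n) (p n)"
    and Sigma_sym: "\<And>n. transpose_mat (Sigma n) = Sigma n"
    and Sigma_diag: "\<And>n i. i < p n \<Longrightarrow> Sigma n $$ (i, i) = 1"
    and Theta_carrier: "\<And>n. Theta n \<in> carrier_mat (p n) (p n)"
    and Theta_inv: "\<And>n. inverts_mat (Sigma n) (Theta n) \<and> inverts_mat (Theta n) (Sigma n)"
    and Lmin_eig: "\<And>n. eigenvalue (Sigma n) ((Lmin n)\<^sup>2)"
    and Lmin_min: "\<And>n k. eigenvalue (Sigma n) k \<Longrightarrow> (Lmin n)\<^sup>2 \<le> k"
    and Lmin_bound: "(\<lambda>n. 1 / (Lmin n)\<^sup>2) \<in> O(\<lambda>n. 1)"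
    and gamma0_carrier: "\<And>n. gamma0 n \<in> carrier_vec (p n - 1)"
    and gamma0_def: "\<And>n. sub_mm (Sigma n) *\<^sub>v gamma0 n = sub_m1 (Sigma n)"
    and gs_carrier: "\<And>n. gs n \<in> carrier_vec (p n - 1)"
    and ls_pos: "\<And>n. ls n > 0"
    and elig1: "\<And>n. vnorm_inf (sub_mm (Sigma n) *\<^sub>v (gs n - gamma0 n)) \<le> ls n"
    and elig2: "(\<lambda>n. ls n * vnorm_1 (gs n)) \<longlonglongrightarrow> 0"
  shows
    "(\<exists>e. e \<longlonglongrightarrow> 0 \<and>
        (\<forall>n. 1 - gamma0 n \<bullet> (sub_mm (Sigma n) *\<^sub>v gs n) \<ge> (Lmin n)\<^sup>2 - e n))
   \<and> (\<exists>c>0. \<forall>\<^sub>F n in sequentially. 1 - gamma0 n \<bullet> (sub_mm (Sigma n) *\<^sub>v gs n) \<ge> c)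
   \<and> (\<forall>\<^sub>F n in sequentially.
        vnorm_inf (Sigma n *\<^sub>v (theta_sharp (Sigma n) (gamma0 n) (gs n) - col (Theta n) 0))
          \<le> ls n / (1 - gamma0 n \<bullet> (sub_mm (Sigma n) *\<^sub>v gs n)))
   \<and> (\<lambda>n. ls n / (1 - gamma0 n \<bullet> (sub_mm (Sigma n) *\<^sub>v gs n))) \<in> O(ls)
   \<and> (\<lambda>n. theta_sharp (Sigma n) (gamma0 n) (gs n) \<bullet>
            (Sigma n *\<^sub>v theta_sharp (Sigma n) (gamma0 n) (gs n))
          - theta_sharp (Sigma n) (gamma0 n) (gs n) $ 0) \<longlonglongrightarrow> 0
   \<and> (\<exists>e. e \<longlonglongrightarrow> 0 \<and> (\<forall>\<^sub>F n in sequentially.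
          theta_sharp (Sigma n) (gamma0 n) (gs n) $ 0 \<le> Theta n $$ (0, 0) + e n))
   \<and> ((\<exists>c>0. \<forall>\<^sub>F n in sequentially.
          Theta n $$ (0, 0) - theta_sharp (Sigma n) (gamma0 n) (gs n) $ 0 \<ge> c)
       \<longrightarrow> (\<exists>c>0. \<forall>\<^sub>F n in sequentially. ls n * vnorm_1 (gamma0 n) \<ge> c))"
proof -
  define k where "k n = p n - 1" for n
  have p_eq: "p n = Suc (k n)" for n using p_pos[of n] by (simp add: k_def)
  have rayleigh: "(Lmin n)\<^sup>2 * (v \<bullet> v) \<le> v \<bullet> (Sigma n *\<^sub>v v)" if "v \<in> carrier_vec (p n)" for n v
    using rayleigh_lower_bound[OF Sigma_carrier Sigma_sym Lmin_min that] .
  have eig_nonneg: "0 \<le> e" if "eigenvalue (Sigma n) e" for n e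
    by (rule order_trans[OF zero_le_power2 Lmin_min[OF that]])
  have reg: "partial_regression (k n) (Sigma n) (Theta n) (gamma0 n)" for n
    by (rule partial_regression_intro[OF _ Sigma_sym Sigma_diag[where i=0] eig_nonneg _
          conjunct1[OF Theta_inv] conjunct2[OF Theta_inv]])
      (use Sigma_carrier Theta_carrier gamma0_carrier gamma0_def p_pos in \<open>simp_all add: p_eq\<close>)
  have gs: "gs n \<in> carrier_vec (k n)" for n using gs_carrier by (simp add: k_def)
  define s0 where "s0 n = 1 - gamma0 n \<bullet> (sub_mm (Sigma n) *\<^sub>v gamma0 n)" for n
  define s where "s n = 1 - gamma0 n \<bullet> (sub_mm (Sigma n) *\<^sub>v gs n)" for n
  define e where "e n = ls n * vnorm_1 (gs n)" for n
  define th where "th n = theta_sharp (Sigma n) (gamma0 n) (gs n)" for n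
  note tau_sq = partial_regression.tau_sq_def[OF reg]
  note bounds = partial_regression.eligible_pair_bounds[OF reg gs elig1, unfolded tau_sq,
      folded s_def s0_def th_def]
  have L_le_s0: "(Lmin n)\<^sup>2 \<le> s0 n" for n
    using partial_regression.tau_sq_gamma0_ge[OF reg zero_le_power2] rayleigh
    by (simp add: tau_sq s0_def p_eq)
  have s_ge: "s0 n - e n \<le> s n" for n using bounds(1) by (simp add: e_def)
  have Theta_00: "Theta n $$ (0, 0) = 1 / s0 n" for n
  proof -
    have "Theta n $$ (0, 0) * s0 n = 1"
      using partial_regression.Theta_00[OF reg, of n] by (simp add: tau_sq s0_def)
    then show ?thesis by (auto simp: eq_divide_eq)
  qed
  have th_0: "th n $ 0 = 1 / s n" for n
    using partial_regression.theta_sharp_0[OF reg] by (simp add: tau_sq s_def th_def)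
  have "Theta n * Sigma n = 1\<^sub>m (p n)" for n
    using Theta_inv[of n] Theta_carrier[of n] by (simp add: inverts_mat_def)
  then have Lmin_pos: "0 < (Lmin n)\<^sup>2" for n
    using eigenvalue_nonzero_if_invertible[OF Sigma_carrier Theta_carrier _ Lmin_eig]
    by (simp add: less_le)
  obtain c where "0 < c" and ev_L: "\<forall>\<^sub>F n in sequentially. c \<le> (Lmin n)\<^sup>2"
    using eventually_lower_bound_of_inverse_bigo[OF Lmin_bound Lmin_pos] by blast
  have e_lim: "e \<longlonglongrightarrow> 0" using elig2 by (simp add: e_def[abs_def])
  have ev_s0: "\<forall>\<^sub>F n in sequentially. c \<le> s0 n"
    using ev_L by (rule eventually_mono) (rule order_trans[OF _ L_le_s0])
  have ev_s: "\<forall>\<^sub>F n in sequentially. c / 2 \<le> s n"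
    by (rule eventually_half_lower_bound[OF \<open>0 < c\<close> ev_s0 e_lim s_ge])
  have ev_s0': "\<forall>\<^sub>F n in sequentially. c / 2 \<le> s0 n"
    using ev_s0 by (rule eventually_mono) (use \<open>0 < c\<close> in simp)
  have "0 < c / 2" using \<open>0 < c\<close> by simp
  show ?thesis
    unfolding s_def[symmetric] th_def[symmetric]
  proof (intro conjI)
    have "(Lmin n)\<^sup>2 - e n \<le> s n" for n using L_le_s0[of n] s_ge[of n] by linarith
    with e_lim show "\<exists>e. e \<longlonglongrightarrow> 0 \<and> (\<forall>n. (Lmin n)\<^sup>2 - e n \<le> s n)" by blast
    show "\<exists>c>0. \<forall>\<^sub>F n in sequentially. c \<le> s n" using \<open>0 < c / 2\<close> ev_s by blast
    show "\<forall>\<^sub>F n in sequentially. vnorm_inf (Sigma n *\<^sub>v (th n - col (Theta n) 0)) \<le> ls n / s n"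
      using ev_s by (rule eventually_mono) (use bounds(3) \<open>0 < c / 2\<close> in auto)
    show "(\<lambda>n. ls n / s n) \<in> O(ls)" by (rule bigo_divide_bounded_below[OF \<open>0 < c / 2\<close> ev_s])
    have lim: "(\<lambda>n. e n / (s n)\<^sup>2) \<longlonglongrightarrow> 0"
      using ev_s \<open>0 < c / 2\<close>
      by (intro tendsto_zero_divide_bounded_below[OF e_lim, of "(c / 2)\<^sup>2"])
        (auto elim!: eventually_mono intro: power_mono)
    have "norm (th n \<bullet> (Sigma n *\<^sub>v th n) - th n $ 0) \<le> norm (e n / (s n)\<^sup>2) * 1" for n
      using bounds(4)[of n] ls_pos[of n] by (simp add: e_def vnorm_1_def sum_nonneg)
    then show "(\<lambda>n. th n \<bullet> (Sigma n *\<^sub>v th n) - th n $ 0) \<longlonglongrightarrow> 0"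
      by (intro tendsto_0_le[OF lim always_eventually] allI)
    have "s0 n - s n \<le> e n" for n using s_ge[of n] by linarith
    from inverse_perturbation_null[OF \<open>0 < c / 2\<close> ev_s ev_s0' e_lim this]
    show "\<exists>e. e \<longlonglongrightarrow> 0 \<and> (\<forall>\<^sub>F n in sequentially. th n $ 0 \<le> Theta n $$ (0, 0) + e n)"
      by (simp add: th_0 Theta_00)
    show "(\<exists>c>0. \<forall>\<^sub>F n in sequentially. c \<le> Theta n $$ (0, 0) - th n $ 0)
          \<longrightarrow> (\<exists>c>0. \<forall>\<^sub>F n in sequentially. c \<le> ls n * vnorm_1 (gamma0 n))"
    proof (intro impI, elim exE conjE)
      fix d assume "0 < d" and gap: "\<forall>\<^sub>F n in sequentially. d \<le> Theta n $$ (0, 0) - th n $ 0"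
      have s_le: "s n - s0 n \<le> ls n * vnorm_1 (gamma0 n)" for n using bounds(2)[of n] by linarith
      have "\<forall>\<^sub>F n in sequentially. d \<le> 1 / s0 n - 1 / s n" using gap by (simp add: th_0 Theta_00)
      then have "\<forall>\<^sub>F n in sequentially. d * (c / 2)\<^sup>2 \<le> ls n * vnorm_1 (gamma0 n)"
        by (rule inverse_gap_le[OF \<open>0 < c / 2\<close> ev_s ev_s0' s_le less_imp_le[OF \<open>0 < d\<close>]])
      then show "\<exists>c>0. \<forall>\<^sub>F n in sequentially. c \<le> ls n * vnorm_1 (gamma0 n)"
        using \<open>0 < d\<close> \<open>0 < c / 2\<close> by (intro exI[of _ "d * (c / 2)\<^sup>2"]) simp
    qed
  qed
qed

end
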